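(* For every integer $n\geq 1$, $\mathrm{R}_3(\mathcal{B}_n)\leq \mathrm{RR}(\mathcal{B}_2:\mathcal{B}_n)\leq \mathrm{R}_3(\mathcal{B}_n)+n$.
   Context: $\mathcal{B}_N$ denotes the Boolean lattice of all subsets of $[N]$ ordered by inclusion. An induced copy of a poset $\mathcal{P}$ in a poset $\mathcal{Q}$ is the image of an injection $f:\mathcal{P}\to\mathcal{Q}$ with $f(X)\le f(Y)$ iff $X\le Y$. Monochromatic: all sets share a color; rainbow: pairwise distinct colors. $\mathrm{R}_k(\mathcal{P})$ is the smallest $n$ such that every coloring of $\mathcal{B}_n$ with $k$ colors contains a monochromatic induced copy of $\mathcal{P}$. $\mathrm{RR}(\mathcal{Q}:\mathcal{P})$ is the smallest $n$ such that every coloring (with any number of colors) of the sets of $\mathcal{B}_n$ contains a rainbow induced copy of $\mathcal{Q}$ or a monochromatic induced copy of $\mathcal{P}$. *)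

theory Defs
  imports Main
begin

definition bool_lat :: "nat \<Rightarrow> nat set set" where
  "bool_lat N = Pow {..<N}"

definition induced_copy :: "nat set set \<Rightarrow> nat set set \<Rightarrow> nat set set \<Rightarrow> bool" where
  "induced_copy P Q S \<longleftrightarrow> (\<exists>f. inj_on f P \<and> f ` P \<subseteq> Q \<and> S = f ` P \<and>
      (\<forall>X\<in>P. \<forall>Y\<in>P. f X \<subseteq> f Y \<longleftrightarrow> X \<subseteq> Y))"

definition monochromatic :: "(nat set \<Rightarrow> 'c) \<Rightarrow> nat set set \<Rightarrow> bool" where
  "monochromatic c S \<longleftrightarrow> (\<forall>A\<in>S. \<forall>B\<in>S. c A = c B)"

definition rainbow :: "(nat set \<Rightarrow> 'c) \<Rightarrow> nat set set \<Rightarrow> bool" where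
  "rainbow c S \<longleftrightarrow> inj_on c S"

definition R :: "nat \<Rightarrow> nat \<Rightarrow> nat" where
  "R k n = (LEAST m. \<forall>c :: nat set \<Rightarrow> nat. (\<forall>X\<in>bool_lat m. c X < k) \<longrightarrow>
      (\<exists>S. induced_copy (bool_lat n) (bool_lat m) S \<and> monochromatic c S))"

text \<open>RR(B_q : B_n): least m such that every colouring (any number of colours; colours taken
from nat, which is no restriction as B_m is finite) of B_m has a rainbow induced copy of B_q
or a monochromatic induced copy of B_n.\<close>
definition RR :: "nat \<Rightarrow> nat \<Rightarrow> nat" where
  "RR q n = (LEAST m. \<forall>c :: nat set \<Rightarrow> nat.
      (\<exists>S. induced_copy (bool_lat q) (bool_lat m) S \<and> rainbow c S) \<or>
      (\<exists>S. induced_copy (bool_lat n) (bool_lat m) S \<and> monochromatic c S))"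

end

theory Submission
  imports Defs
begin

(* A 3-colouring has no rainbow B_2, which has four elements; this gives the lower bound.
   For the upper bound let M = R_3(B_n), N = M + n, and let c colour B_N without a rainbow B_2.
   Any interval [B, T] of B_N with |T - B| >= M is a copy of B_M, so if it shows at most three
   colours it contains a monochromatic B_n. Such an interval exists whenever two nested sets
   A, D with |D - A| >= M + 2 have different colours: two parallel intervals over A + y and
   A + z consist of mutually incomparable sets, and the absence of a rainbow B_2 between A and D
   leaves at most three colours on one of them. For n >= 2 this applies to {} and [N] unless
   they share their colour. If they do and n >= 3, the same argument handles every set of rank
   below n - 1 or at least M + n - 1 of another colour; otherwise these ranks are monochromatic
   and B_n embeds into them by adding M fixed points to its upper half. The cases n = 1 and
   n = 2 with equally coloured ends are settled by direct arguments on small B_2's. *)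

definition order_embedding :: "nat set set \<Rightarrow> nat set set \<Rightarrow> (nat set \<Rightarrow> nat set) \<Rightarrow> bool" where
  "order_embedding P Q f \<longleftrightarrow> f ` P \<subseteq> Q \<and> (\<forall>X\<in>P. \<forall>Y\<in>P. f X \<subseteq> f Y \<longleftrightarrow> X \<subseteq> Y)"

definition mono_copy :: "nat \<Rightarrow> (nat set \<Rightarrow> nat) \<Rightarrow> nat \<Rightarrow> bool" where
  "mono_copy n c N \<longleftrightarrow> (\<exists>S. induced_copy (bool_lat n) (bool_lat N) S \<and> monochromatic c S)"

definition rainbow_copy :: "nat \<Rightarrow> (nat set \<Rightarrow> nat) \<Rightarrow> nat \<Rightarrow> bool" where
  "rainbow_copy q c N \<longleftrightarrow> (\<exists>S. induced_copy (bool_lat q) (bool_lat N) S \<and> rainbow c S)"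

definition arrows3 :: "nat \<Rightarrow> nat \<Rightarrow> bool" where
  "arrows3 n M \<longleftrightarrow> (\<forall>c. (\<forall>X\<in>bool_lat M. c X < 3) \<longrightarrow> mono_copy n c M)"

definition rainbow_arrows :: "nat \<Rightarrow> nat \<Rightarrow> bool" where
  "rainbow_arrows n N \<longleftrightarrow> (\<forall>c. rainbow_copy 2 c N \<or> mono_copy n c N)"

lemma arrows3D: "arrows3 n M \<Longrightarrow> \<forall>X\<in>bool_lat M. c X < 3 \<Longrightarrow> mono_copy n c M"
  unfolding arrows3_def by blast

lemma R_eq_Least_arrows3: "R 3 n = (LEAST M. arrows3 n M)"
  unfolding R_def arrows3_def mono_copy_def ..

lemma RR_eq_Least_rainbow_arrows: "RR 2 n = (LEAST N. rainbow_arrows n N)"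
  unfolding RR_def rainbow_arrows_def rainbow_copy_def mono_copy_def ..

lemma order_embedding_inj_on: "order_embedding P Q f \<Longrightarrow> inj_on f P"
  unfolding order_embedding_def inj_on_def by (metis subset_antisym order_refl)

lemma order_embeddingD: "order_embedding P Q f \<Longrightarrow> X \<in> P \<Longrightarrow> Y \<in> P \<Longrightarrow> f X \<subseteq> f Y \<longleftrightarrow> X \<subseteq> Y"
  unfolding order_embedding_def by blast

lemma induced_copy_iff_order_embedding:
  "induced_copy P Q S \<longleftrightarrow> (\<exists>f. order_embedding P Q f \<and> S = f ` P)"
  unfolding induced_copy_def using order_embedding_inj_on
  by (auto simp: order_embedding_def)

lemma order_embedding_comp:
  assumes "order_embedding P Q f" "order_embedding Q Q' g"
  shows "order_embedding P Q' (g \<circ> f)"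
  using assms unfolding order_embedding_def by (simp add: image_subset_iff)

lemma order_embedding_mono_target:
  "order_embedding P Q f \<Longrightarrow> Q \<subseteq> Q' \<Longrightarrow> order_embedding P Q' f"
  unfolding order_embedding_def by blast

lemma bool_lat_finite: "finite (bool_lat N)"
  unfolding bool_lat_def by simp

lemma Pow_subset_bool_lat: "T \<subseteq> {..<N} \<Longrightarrow> Pow T \<subseteq> bool_lat N"
  unfolding bool_lat_def by blast

lemma bool_lat_1: "bool_lat 1 = {{}, {0}}"
  unfolding bool_lat_def by (auto simp: lessThan_Suc)

lemma bool_lat_2: "bool_lat 2 = {{}, {0}, {1}, {0, 1}}"
  unfolding bool_lat_def by (auto simp: numeral_2_eq_2 lessThan_Suc Pow_insert)

lemma induced_copy_B1:
  assumes "U \<subset> V" "V \<subseteq> {..<N}"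
  shows "induced_copy (bool_lat 1) (bool_lat N) {U, V}"
  unfolding induced_copy_iff_order_embedding
proof (intro exI conjI)
  let ?f = "\<lambda>Z. if 0 \<in> Z then V else U"
  show "order_embedding (bool_lat 1) (bool_lat N) ?f"
    using assms unfolding order_embedding_def bool_lat_1 by (auto simp: bool_lat_def)
  show "{U, V} = ?f ` bool_lat 1" unfolding bool_lat_1 by auto
qed

definition diamond :: "nat set \<Rightarrow> nat set \<Rightarrow> nat set \<Rightarrow> nat set \<Rightarrow> bool" where
  "diamond A P W D \<longleftrightarrow> A \<subseteq> P \<and> A \<subseteq> W \<and> P \<subseteq> D \<and> W \<subseteq> D \<and> \<not> P \<subseteq> W \<and> \<not> W \<subseteq> P"

lemma induced_copy_diamond:
  assumes "diamond A P W D" "D \<subseteq> {..<N}"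
  shows "induced_copy (bool_lat 2) (bool_lat N) {A, P, W, D}"
  unfolding induced_copy_iff_order_embedding
proof (intro exI conjI)
  let ?f = "\<lambda>Z. if (0::nat) \<in> Z then if 1 \<in> Z then D else P else if 1 \<in> Z then W else A"
  have f: "?f {} = A" "?f {0} = P" "?f {1} = W" "?f {0, 1} = D" by simp_all
  have "A \<subseteq> D" "\<not> D \<subseteq> P" "\<not> D \<subseteq> W" "\<not> P \<subseteq> A" "\<not> W \<subseteq> A" "\<not> D \<subseteq> A"
    using assms(1) unfolding diamond_def by blast+
  then show "order_embedding (bool_lat 2) (bool_lat N) ?f"
    using assms unfolding order_embedding_def bool_lat_2 diamond_def f
    by (simp add: bool_lat_def) blast
  show "{A, P, W, D} = ?f ` bool_lat 2" unfolding bool_lat_2 f by auto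
qed

lemma diamond_not_rainbow:
  assumes "\<not> rainbow_copy 2 c N" "diamond A P W D" "D \<subseteq> {..<N}"
  shows "\<not> distinct [c A, c P, c W, c D]"
proof
  assume "distinct [c A, c P, c W, c D]"
  then have "rainbow c {A, P, W, D}" unfolding rainbow_def inj_on_def by auto
  with assms show False using induced_copy_diamond unfolding rainbow_copy_def by blast
qed

lemma mono_copy_diamond:
  assumes "diamond A P W D" "D \<subseteq> {..<N}" "c P = c A" "c W = c A" "c D = c A"
  shows "mono_copy 2 c N"
proof -
  have "monochromatic c {A, P, W, D}" using assms(3-5) unfolding monochromatic_def by auto
  then show ?thesis using induced_copy_diamond[OF assms(1,2)] unfolding mono_copy_def by blast
qed

lemma mono_copy_B1:
  assumes "U \<subset> V" "V \<subseteq> {..<N}" "c U = c V"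
  shows "mono_copy 1 c N"
proof -
  have "monochromatic c {U, V}" using assms(3) unfolding monochromatic_def by auto
  then show ?thesis using induced_copy_B1[OF assms(1,2)] unfolding mono_copy_def by blast
qed

lemma interval_order_embedding:
  assumes "B \<subseteq> T" "finite T" "card (T - B) = M"
  obtains \<phi> where "order_embedding (bool_lat M) (Pow T) \<phi>"
    and "\<phi> ` bool_lat M = {Z. B \<subseteq> Z \<and> Z \<subseteq> T}"
proof -
  obtain e where e: "bij_betw e {..<M} (T - B)"
    using ex_bij_betw_nat_finite[of "T - B"] assms(2,3) by (auto simp: atLeast0LessThan)
  let ?\<phi> = "\<lambda>X. B \<union> e ` X"
  have inj: "inj_on e {..<M}" and im: "e ` {..<M} = T - B"
    using e unfolding bij_betw_def by auto
  have "order_embedding (bool_lat M) (Pow T) ?\<phi>"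
    unfolding order_embedding_def bool_lat_def
  proof (intro conjI ballI)
    show "?\<phi> ` Pow {..<M} \<subseteq> Pow T" using assms(1) im by auto
  next
    fix X Y assume "X \<in> Pow {..<M}" "Y \<in> Pow {..<M}"
    then have "e ` X \<subseteq> T - B" using im by auto
    moreover have "e ` X \<subseteq> e ` Y \<longleftrightarrow> X \<subseteq> Y"
      using inj \<open>X \<in> _\<close> \<open>Y \<in> _\<close>
      by (simp, metis image_Un inj_on_image_eq_iff le_supI subset_Un_eq)
    ultimately show "?\<phi> X \<subseteq> ?\<phi> Y \<longleftrightarrow> X \<subseteq> Y" by blast
  qed
  moreover have "?\<phi> ` bool_lat M = {Z. B \<subseteq> Z \<and> Z \<subseteq> T}"
  proof -
    have "?\<phi> ` bool_lat M = (\<lambda>Y. B \<union> Y) ` (image e ` bool_lat M)" by (simp add: image_image)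
    also have "image e ` bool_lat M = Pow (T - B)"
      using bij_betw_Pow[OF e] unfolding bij_betw_def bool_lat_def by simp
    also have "(\<lambda>Y. B \<union> Y) ` Pow (T - B) = {Z. B \<subseteq> Z \<and> Z \<subseteq> T}"
      using assms(1) by (auto intro!: image_eqI[where x = "_ - B"])
    finally show ?thesis .
  qed
  ultimately show thesis by (rule that)
qed

lemma mono_copy_if_few_colours:
  assumes "arrows3 n M" "order_embedding (bool_lat M) (bool_lat N) \<phi>"
    and "card (c ` \<phi> ` bool_lat M) \<le> 3"
  shows "mono_copy n c N"
proof -
  let ?C = "c ` \<phi> ` bool_lat M"
  have "finite ?C" using bool_lat_finite by (intro finite_imageI)
  moreover have "card ?C \<le> card {..<3::nat}" using assms(3) by simp
  ultimately have "\<exists>h. h ` ?C \<subseteq> {..<3::nat} \<and> inj_on h ?C"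
    by (intro card_le_inj finite_lessThan)
  then obtain h :: "nat \<Rightarrow> nat" where h: "h ` ?C \<subseteq> {..<3}" "inj_on h ?C" by blast
  then have "\<forall>X\<in>bool_lat M. (h \<circ> c \<circ> \<phi>) X < 3" by auto
  with assms(1) have "mono_copy n (h \<circ> c \<circ> \<phi>) M" by (rule arrows3D)
  then obtain S where S: "induced_copy (bool_lat n) (bool_lat M) S" "monochromatic (h \<circ> c \<circ> \<phi>) S"
    unfolding mono_copy_def by blast
  then obtain f where f: "order_embedding (bool_lat n) (bool_lat M) f" "S = f ` bool_lat n"
    unfolding induced_copy_iff_order_embedding by blast
  have "induced_copy (bool_lat n) (bool_lat N) (\<phi> ` S)"
    unfolding induced_copy_iff_order_embedding f(2) image_comp
    using order_embedding_comp[OF f(1) assms(2)] by (intro exI[of _ "\<phi> \<circ> f"]) simp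
  moreover have "monochromatic c (\<phi> ` S)"
    unfolding monochromatic_def
  proof (intro ballI)
    fix A B assume "A \<in> \<phi> ` S" "B \<in> \<phi> ` S"
    then obtain X Y where XY: "X \<in> S" "Y \<in> S" and AB: "A = \<phi> X" "B = \<phi> Y" by blast
    have "S \<subseteq> bool_lat M" using f unfolding order_embedding_def by simp
    then have "c (\<phi> X) \<in> ?C" "c (\<phi> Y) \<in> ?C" using XY by blast+
    moreover have "h (c (\<phi> X)) = h (c (\<phi> Y))"
      using S(2) XY unfolding monochromatic_def comp_def by blast
    ultimately show "c A = c B" unfolding AB using h(2) unfolding inj_on_def by blast
  qed
  ultimately show ?thesis unfolding mono_copy_def by blast
qed

lemma mono_copy_if_interval_few_colours:
  assumes "arrows3 n M" "B \<subseteq> T" "T \<subseteq> {..<N}" "M \<le> card (T - B)"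
    and "card (c ` {Z. B \<subseteq> Z \<and> Z \<subseteq> T}) \<le> 3"
  shows "mono_copy n c N"
proof -
  obtain H where H: "H \<subseteq> T - B" "card H = M"
    using obtain_subset_with_card_n[OF assms(4)] by blast
  have "finite T" using assms(3) finite_subset by blast
  have BH: "B \<union> H \<subseteq> T" "B \<union> H - B = H" using H assms(2) by blast+
  obtain \<phi> where \<phi>: "order_embedding (bool_lat M) (Pow (B \<union> H)) \<phi>"
    "\<phi> ` bool_lat M = {Z. B \<subseteq> Z \<and> Z \<subseteq> B \<union> H}"
    using interval_order_embedding[of B "B \<union> H" M] finite_subset[OF BH(1) \<open>finite T\<close>]
    unfolding BH(2) H(2) by blast
  have "Pow (B \<union> H) \<subseteq> bool_lat N"
    using BH(1) assms(3) by (intro Pow_subset_bool_lat) blast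
  with \<phi>(1) have emb: "order_embedding (bool_lat M) (bool_lat N) \<phi>"
    by (rule order_embedding_mono_target)
  have "c ` \<phi> ` bool_lat M \<subseteq> c ` {Z. B \<subseteq> Z \<and> Z \<subseteq> T}"
    unfolding \<phi>(2) using BH(1) by (intro image_mono) blast
  moreover have "finite {Z. B \<subseteq> Z \<and> Z \<subseteq> T}"
    using \<open>finite T\<close> by (rule rev_finite_subset[OF finite_Pow_iff[THEN iffD2]]) blast
  ultimately have "card (c ` \<phi> ` bool_lat M) \<le> card (c ` {Z. B \<subseteq> Z \<and> Z \<subseteq> T})"
    by (simp add: card_mono)
  then have "card (c ` \<phi> ` bool_lat M) \<le> 3" using assms(5) by linarith
  then show ?thesis by (rule mono_copy_if_few_colours[OF assms(1) emb])
qed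

lemma order_embedding_card_gap:
  assumes "order_embedding (bool_lat n) (bool_lat M) f" "i \<le> n"
  shows "card (f {}) + i \<le> card (f {..<i})"
  using assms(2)
proof (induction i)
  case 0
  then show ?case by simp
next
  case (Suc i)
  have mem: "{..<i} \<in> bool_lat n" "{..<Suc i} \<in> bool_lat n"
    using Suc.prems unfolding bool_lat_def by auto
  moreover have "{..<i} \<subset> {..<Suc i}" by auto
  ultimately have "f {..<i} \<subset> f {..<Suc i}"
    using order_embeddingD[OF assms(1)] by (simp add: less_le_not_le)
  moreover have "finite (f {..<Suc i})"
    using assms(1) mem(2) unfolding order_embedding_def bool_lat_def
    by (meson finite_lessThan image_subset_iff PowD finite_subset)
  ultimately have "card (f {..<i}) < card (f {..<Suc i})" by (rule psubset_card_mono[rotated])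
  with Suc show ?case by simp
qed

lemma arrows3_imp_three_mul_le:
  assumes "arrows3 n M"
  shows "3 * n \<le> M"
proof (rule ccontr)
  assume "\<not> 3 * n \<le> M"
  then have small: "M < 3 * n" by simp
  define c where "c X = card X div n" for X :: "nat set"
  have "\<forall>X\<in>bool_lat M. c X < 3"
  proof
    fix X assume "X \<in> bool_lat M"
    then have "card X \<le> M" unfolding bool_lat_def using card_mono[of "{..<M}" X] by simp
    with small show "c X < 3" unfolding c_def by (simp add: div_less_iff_less_mult mult.commute)
  qed
  with assms have "mono_copy n c M" by (rule arrows3D)
  then obtain f where f: "order_embedding (bool_lat n) (bool_lat M) f"
    and mono: "monochromatic c (f ` bool_lat n)"
    unfolding mono_copy_def induced_copy_iff_order_embedding by blast
  have "{} \<in> bool_lat n" "{..<n} \<in> bool_lat n" unfolding bool_lat_def by auto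
  then have same: "c (f {}) = c (f {..<n})" using mono unfolding monochromatic_def by blast
  have "n \<noteq> 0" using small by auto
  then have "card (f {}) div n + 1 = (card (f {}) + n) div n" by (simp add: div_add_self2)
  also have "\<dots> \<le> card (f {..<n}) div n"
    using order_embedding_card_gap[OF f order_refl] by (rule div_le_mono)
  finally show False using same unfolding c_def by simp
qed

lemma card_interval_minus_two:
  assumes "finite D" "A \<subseteq> D" "y \<in> D - A" "z \<in> D - A" "y \<noteq> z"
  shows "card ((D - {z}) - (A \<union> {y})) = card (D - A) - 2"
proof -
  have "(D - {z}) - (A \<union> {y}) = (D - A) - {y, z}" by blast
  moreover have "card ((D - A) - {y, z}) = card (D - A) - 2"
    using assms by (subst card_Diff_subset) auto
  ultimately show ?thesis by simp
qed

lemma mono_copy_if_ends_coloured_differently: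
  assumes "arrows3 n M" "\<not> rainbow_copy 2 c N"
    and "A \<subseteq> D" "D \<subseteq> {..<N}" "c A \<noteq> c D" "M + 2 \<le> card (D - A)"
  shows "mono_copy n c N"
proof -
  have "finite D" using assms(4) finite_subset by blast
  obtain y z where yz: "y \<in> D - A" "z \<in> D - A" "y \<noteq> z"
  proof -
    obtain Y where "Y \<subseteq> D - A" "card Y = 2" using obtain_subset_with_card_n assms(6)
      by (metis le_add2 order_trans)
    then show thesis using that by (auto simp: card_2_iff)
  qed
  define I where "I u v = {Z. A \<union> {u} \<subseteq> Z \<and> Z \<subseteq> D - {v}}" for u v
  have interval: "A \<union> {u} \<subseteq> D - {v}" "D - {v} \<subseteq> {..<N}"
      "M \<le> card ((D - {v}) - (A \<union> {u}))"
    if "u \<in> D - A" "v \<in> D - A" "u \<noteq> v" for u v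
    using card_interval_minus_two[OF \<open>finite D\<close> assms(3) that] that assms(3,4,6) by auto
  show ?thesis
  proof (cases "c ` I z y \<subseteq> {c A, c D}")
    case True
    then have "card (c ` I z y) \<le> card {c A, c D}" by (simp add: card_mono)
    also have "\<dots> \<le> 3" by (simp add: card_insert_if)
    finally show ?thesis
      using mono_copy_if_interval_few_colours[OF assms(1) interval[of z y]] yz
      unfolding I_def by (simp add: insert_commute)
  next
    case False
    then obtain W where W: "W \<in> I z y" "c W \<noteq> c A" "c W \<noteq> c D" by blast
    have "c ` I y z \<subseteq> {c A, c D, c W}"
    proof
      fix C assume "C \<in> c ` I y z"
      then obtain P where P: "P \<in> I y z" "C = c P" by blast
      have "diamond A P W D" using P(1) W(1) yz unfolding I_def diamond_def by auto
      then have "\<not> distinct [c A, c P, c W, c D]"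
        using diamond_not_rainbow[OF assms(2)] assms(4) by blast
      then show "C \<in> {c A, c D, c W}" using P(2) W(2,3) assms(5) by auto
    qed
    then have "card (c ` I y z) \<le> card {c A, c D, c W}" by (simp add: card_mono)
    also have "\<dots> \<le> 3" by (simp add: card_insert_if)
    finally show ?thesis
      using mono_copy_if_interval_few_colours[OF assms(1) interval[of y z]] yz
      unfolding I_def by simp
  qed
qed

lemma mono_copy_B1_if_no_rainbow:
  assumes "\<not> rainbow_copy 2 c N" "4 \<le> N"
  shows "mono_copy 1 c N"
proof (rule ccontr)
  assume no_mono: "\<not> mono_copy 1 c N"
  define U where "U = {..<N}"
  have chain_distinct: "c X \<noteq> c Y" if "X \<subset> Y" "Y \<subseteq> U" for X Y
    using mono_copy_B1[of X Y N c] that no_mono unfolding U_def by blast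
  have "0 \<in> U" "1 \<in> U" "2 \<in> U" "3 \<in> U" using assms(2) unfolding U_def by simp_all
  then have in_U: "{0, 1} \<subseteq> U" "{2} \<subseteq> U" "{0, 1} \<noteq> U" "{2} \<noteq> U"
    "{0} \<subseteq> U" "{0} \<noteq> U" "{} \<noteq> U" by auto
  have "c {0} = c {2}" "c {0, 1} = c {2}"
  proof -
    have "diamond {} {0} {2} U" "diamond {} {0, 1} {2} U"
      using in_U unfolding diamond_def by auto
    then have "\<not> distinct [c {}, c {0}, c {2}, c U]" "\<not> distinct [c {}, c {0, 1}, c {2}, c U]"
      using diamond_not_rainbow[OF assms(1)] unfolding U_def by blast+
    moreover have "c {} \<noteq> c U" "c {} \<noteq> c {0}" "c {} \<noteq> c {0, 1}" "c {} \<noteq> c {2}"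
      "c {0} \<noteq> c U" "c {0, 1} \<noteq> c U" "c {2} \<noteq> c U"
      using in_U by (simp_all add: chain_distinct psubset_eq)
    ultimately show "c {0} = c {2}" "c {0, 1} = c {2}" by auto
  qed
  then show False using chain_distinct[of "{0}" "{0, 1}"] in_U by auto
qed

lemma mono_copy_if_extreme_ranks_constant:
  assumes "N = M + n"
    and "\<And>K. K \<subseteq> {..<N} \<Longrightarrow> card K < n - 1 \<or> n - 1 + M \<le> card K \<Longrightarrow> c K = a"
  shows "mono_copy n c N"
proof -
  define g where "g Z = (if n - 1 \<le> card Z then Z \<union> {n..<N} else Z)" for Z
  have "order_embedding (bool_lat n) (bool_lat N) g"
    unfolding order_embedding_def
  proof (intro conjI ballI)
    show "g ` bool_lat n \<subseteq> bool_lat N"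
      using assms(1) unfolding g_def bool_lat_def by auto
  next
    fix X Y assume XY: "X \<in> bool_lat n" "Y \<in> bool_lat n"
    then have low: "g X \<inter> {..<n} = X" "g Y \<inter> {..<n} = Y"
      unfolding g_def bool_lat_def by auto
    show "g X \<subseteq> g Y \<longleftrightarrow> X \<subseteq> Y"
    proof
      assume "g X \<subseteq> g Y"
      then show "X \<subseteq> Y" using low by blast
    next
      assume "X \<subseteq> Y"
      moreover have "finite Y" using XY(2) unfolding bool_lat_def by (simp add: finite_subset)
      ultimately have "card X \<le> card Y" by (rule card_mono[rotated])
      with \<open>X \<subseteq> Y\<close> show "g X \<subseteq> g Y" unfolding g_def by auto
    qed
  qed
  moreover have "c (g Z) = a" if "Z \<in> bool_lat n" for Z
  proof (rule assms(2))
    have "Z \<subseteq> {..<n}" using that unfolding bool_lat_def by simp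
    then have "finite Z" "Z \<inter> {n..<N} = {}" using finite_subset by auto
    then have "card (Z \<union> {n..<N}) = card Z + M" using assms(1) by (simp add: card_Un_disjoint)
    then show "card (g Z) < n - 1 \<or> n - 1 + M \<le> card (g Z)" unfolding g_def by auto
    show "g Z \<subseteq> {..<N}" using \<open>Z \<subseteq> {..<n}\<close> assms(1) unfolding g_def by auto
  qed
  then have "monochromatic c (g ` bool_lat n)" unfolding monochromatic_def by auto
  ultimately show ?thesis unfolding mono_copy_def induced_copy_iff_order_embedding by blast
qed

lemma mono_copy_if_equal_ends:
  assumes "arrows3 n M" "\<not> rainbow_copy 2 c N" "N = M + n" "3 \<le> n" "c {} = c {..<N}"
  shows "mono_copy n c N"
proof (cases "\<exists>K. K \<subseteq> {..<N} \<and> card K < n - 1 \<and> c K \<noteq> c {}")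
  case True
  then obtain K where K: "K \<subseteq> {..<N}" "card K < n - 1" "c K \<noteq> c {..<N}"
    using assms(5) by auto
  have "card ({..<N} - K) = N - card K" using K(1) by (simp add: card_Diff_subset finite_subset)
  then have "M + 2 \<le> card ({..<N} - K)" using K(2) assms(3) by simp
  then show ?thesis using mono_copy_if_ends_coloured_differently[OF assms(1,2) K(1)] K(3) by simp
next
  case small_constant: False
  show ?thesis
  proof (cases "\<exists>K. K \<subseteq> {..<N} \<and> n - 1 + M \<le> card K \<and> c K \<noteq> c {}")
    case True
    then obtain K where K: "K \<subseteq> {..<N}" "n - 1 + M \<le> card K" "c {} \<noteq> c K" by auto
    then have "M + 2 \<le> card (K - {})" using assms(4) by simp
    then show ?thesis
      using mono_copy_if_ends_coloured_differently[OF assms(1,2) empty_subsetI K(1) K(3)] by simp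
  next
    case False
    with small_constant show ?thesis
      using mono_copy_if_extreme_ranks_constant[OF assms(3), of c "c {}"] by blast
  qed
qed

lemma obtain_three_distinct:
  assumes "3 \<le> card A"
  obtains x y z where "x \<in> A" "y \<in> A" "z \<in> A" "x \<noteq> y" "y \<noteq> z" "x \<noteq> z"
proof -
  obtain B where "B \<subseteq> A" "card B = 3" using obtain_subset_with_card_n[OF assms] by blast
  then show thesis using that by (auto simp: card_3_iff)
qed

text \<open>Walking through the interval from L to T by incomparable pairs spreads the colour w of S
  to all of L + r, L + r + r2, L + r + r3 and L + r + r2 + r3, a monochromatic B_2.\<close>
lemma mono_copy_B2_if_colour_class_closed:
  assumes "L \<subset> S" "S \<subset> T" "T \<subseteq> {..<N}" "4 \<le> card (T - L)" "c S = w"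
    and closed: "\<And>Z W. L \<subseteq> Z \<Longrightarrow> Z \<subseteq> T \<Longrightarrow> L \<subseteq> W \<Longrightarrow> W \<subseteq> T \<Longrightarrow>
      \<not> Z \<subseteq> W \<Longrightarrow> \<not> W \<subseteq> Z \<Longrightarrow> c W = w \<Longrightarrow> c Z = w"
  shows "mono_copy 2 c N"
proof -
  obtain t r where t: "t \<in> S" "t \<notin> L" and r: "r \<in> T" "r \<notin> S"
    using assms(1,2) by blast
  have "r \<notin> L" "L \<subseteq> T" using r(2) assms(1,2) by blast+
  have cr: "c (L \<union> {r}) = w"
    by (rule closed[OF _ _ _ _ _ _ assms(5)]) (use assms(1,2) t r in blast)+
  have singleton: "c (L \<union> {x}) = w" if "x \<in> T - L" "x \<noteq> r" for x
    by (rule closed[OF _ _ _ _ _ _ cr]) (use that r \<open>r \<notin> L\<close> \<open>L \<subseteq> T\<close> in blast)+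
  have "card (T - L - {r}) = card (T - L) - 1"
    using r(1) \<open>r \<notin> L\<close> assms(3) by (simp add: card_Diff_singleton finite_subset)
  then have "3 \<le> card (T - L - {r})" using assms(4) by simp
  then obtain r2 r3 r4 where rs: "r2 \<in> T - L - {r}" "r3 \<in> T - L - {r}" "r4 \<in> T - L - {r}"
    "r2 \<noteq> r3" "r3 \<noteq> r4" "r2 \<noteq> r4"
    by (rule obtain_three_distinct)
  have "c (L \<union> {r, r2}) = w"
    by (rule closed[OF _ _ _ _ _ _ singleton[of r3]]) (use rs r \<open>L \<subseteq> T\<close> in blast)+
  moreover have "c (L \<union> {r, r3}) = w"
    by (rule closed[OF _ _ _ _ _ _ singleton[of r2]]) (use rs r \<open>L \<subseteq> T\<close> in blast)+
  moreover have "c (L \<union> {r, r2, r3}) = w"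
    by (rule closed[OF _ _ _ _ _ _ singleton[of r4]]) (use rs r \<open>L \<subseteq> T\<close> in blast)+
  moreover have "diamond (L \<union> {r}) (L \<union> {r, r2}) (L \<union> {r, r3}) (L \<union> {r, r2, r3})"
    using rs unfolding diamond_def by auto
  moreover have "L \<union> {r, r2, r3} \<subseteq> {..<N}" using rs r \<open>L \<subseteq> T\<close> assms(3) by blast
  ultimately show ?thesis using cr mono_copy_diamond by metis
qed

lemma common_point_of_colour_class:
  assumes "\<not> mono_copy 2 c N" "c {} = c {..<N}" "0 < N"
  obtains y where "y < N"
    and "\<And>Z. Z \<subseteq> {..<N} \<Longrightarrow> Z \<noteq> {} \<Longrightarrow> Z \<noteq> {..<N} \<Longrightarrow> c Z = c {} \<Longrightarrow> y \<in> Z"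
proof -
  define \<C> where "\<C> = {Z. Z \<subseteq> {..<N} \<and> Z \<noteq> {} \<and> Z \<noteq> {..<N} \<and> c Z = c {}}"
  have chain: "Z \<subseteq> Z' \<or> Z' \<subseteq> Z" if "Z \<in> \<C>" "Z' \<in> \<C>" for Z Z'
  proof (rule ccontr)
    assume "\<not> (Z \<subseteq> Z' \<or> Z' \<subseteq> Z)"
    with that have "diamond {} Z Z' {..<N}" unfolding diamond_def \<C>_def by blast
    moreover have "c Z = c {}" "c Z' = c {}" using that unfolding \<C>_def by auto
    ultimately have "mono_copy 2 c N"
      using mono_copy_diamond[OF _ order_refl] assms(2) by metis
    with assms(1) show False by blast
  qed
  show thesis
  proof (cases "\<C> = {}")
    case True
    then show thesis using that[of 0] assms(3) unfolding \<C>_def by blast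
  next
    case False
    have "finite \<C>" unfolding \<C>_def by (rule finite_subset[of _ "Pow {..<N}"]) auto
    then obtain C where C: "C \<in> \<C>" and minimal: "\<And>Z. Z \<in> \<C> \<Longrightarrow> Z \<subseteq> C \<Longrightarrow> C = Z"
      using finite_has_minimal[OF _ False] by blast
    then obtain y where "y \<in> C" unfolding \<C>_def by blast
    have "C \<subseteq> Z" if "Z \<in> \<C>" for Z using chain[OF that C] minimal[OF that] by blast
    then show thesis
      using that[of y] \<open>y \<in> C\<close> C unfolding \<C>_def by blast
  qed
qed

text \<open>The B_2 with ends {} and G forces two incomparable sets between y and G to share their
  colour unless one of them has colour c G, and a second B_2 with ends Bot and Top of other
  colours rules that out. So the colour class of w is closed under incomparability, on the
  interval above P1 if it is long enough and below P2 otherwise.\<close>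
lemma mono_copy_B2_if_nested_pair:
  assumes no_rainbow: "\<not> rainbow_copy 2 c N"
    and "G \<subseteq> {..<N}" "c {..<N} = c {}" "7 \<le> card G"
    and "y \<in> P1" "P1 \<subset> P2" "P2 \<subseteq> G"
    and not_end_colour: "\<And>Z. y \<in> Z \<Longrightarrow> Z \<subseteq> G \<Longrightarrow> c Z \<noteq> c {}"
    and "distinct [c P1, c P2, c G]"
  shows "mono_copy 2 c N"
proof -
  have "finite G" using assms(2) finite_subset by blast
  have "y \<in> G" using assms(5-7) by blast
  have spread: "c Z = w"
    if "y \<in> Z" "Z \<subseteq> G" "y \<in> W" "W \<subseteq> G" "\<not> Z \<subseteq> W" "\<not> W \<subseteq> Z" "c W = w"
      and "Bot \<subseteq> Z" "Bot \<subseteq> W" "Z \<subseteq> Top" "W \<subseteq> Top" "Top \<subseteq> {..<N}"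
      and "distinct [c Bot, c G, w, c Top]"
    for Z W w Bot Top
  proof -
    have "diamond {} Z W G" using that(2,4-6) unfolding diamond_def by blast
    then have "\<not> distinct [c {}, c Z, c W, c G]"
      using diamond_not_rainbow[OF no_rainbow] assms(2) by blast
    then have "c Z = w \<or> c Z = c G"
      using not_end_colour[of Z] not_end_colour[of W] not_end_colour[OF \<open>y \<in> G\<close>] that
      by auto
    moreover have "diamond Bot Z W Top" using that(5,6,8-11) unfolding diamond_def by blast
    then have "\<not> distinct [c Bot, c Z, c W, c Top]"
      using diamond_not_rainbow[OF no_rainbow] that(12) by blast
    ultimately show "c Z = w" using that(7,13) by auto
  qed
  have "y \<in> P2" "P1 \<subseteq> G" using assms(5-7) by blast+
  then have ends: "c P1 \<noteq> c {}" "c P2 \<noteq> c {}" "c G \<noteq> c {}"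
    using not_end_colour assms(5,7) \<open>y \<in> G\<close> by simp_all
  show ?thesis
  proof (cases "card P1 + 4 \<le> card G")
    case True
    show ?thesis
    proof (rule mono_copy_B2_if_colour_class_closed[where w = "c P2"])
      show "P1 \<subset> P2" "G \<subseteq> {..<N}" "c P2 = c P2" by (fact assms(6) assms(2) refl)+
      show "P2 \<subset> G" using assms(7,9) by auto
      have "card (G - P1) = card G - card P1"
        using finite_subset[OF \<open>P1 \<subseteq> G\<close> \<open>finite G\<close>] \<open>P1 \<subseteq> G\<close> by (rule card_Diff_subset)
      then show "4 \<le> card (G - P1)" using True by simp
    next
      fix Z W assume ZW: "P1 \<subseteq> Z" "Z \<subseteq> G" "P1 \<subseteq> W" "W \<subseteq> G" "\<not> Z \<subseteq> W" "\<not> W \<subseteq> Z"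
        "c W = c P2"
      show "c Z = c P2"
        by (rule spread[of Z W "c P2" P1 "{..<N}"]) (use ZW assms(2,3,5,9) ends in auto)
    qed
  next
    case False
    have "finite P2" using assms(7) \<open>finite G\<close> by (rule finite_subset)
    then have "card P1 < card P2" using assms(6) by (rule psubset_card_mono)
    moreover have "card (P2 - {y}) = card P2 - 1" using assms(5,6) by (auto simp: card_Diff_singleton)
    ultimately have big: "4 \<le> card (P2 - {y})" using False assms(4) by simp
    show ?thesis
    proof (rule mono_copy_B2_if_colour_class_closed[where w = "c P1"])
      show "P1 \<subset> P2" "c P1 = c P1" by (fact assms(6) refl)+
      show "P2 \<subseteq> {..<N}" using assms(2,7) by blast
      show "4 \<le> card (P2 - {y})" by (fact big)
      have "P1 \<noteq> {y}" using False assms(4) by (intro notI) simp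
      then show "{y} \<subset> P1" using assms(5) by blast
    next
      fix Z W assume ZW: "{y} \<subseteq> Z" "Z \<subseteq> P2" "{y} \<subseteq> W" "W \<subseteq> P2" "\<not> Z \<subseteq> W" "\<not> W \<subseteq> Z"
        "c W = c P1"
      show "c Z = c P1"
        by (rule spread[of Z W "c P1" "{}" P2]) (use ZW assms(2,7,9) ends in auto)
    qed
  qed
qed

text \<open>Take a point y2 in every proper nonempty set of the end colour and any other point y1.
  The interval from y1 to G = [N] - y2 is a B_M avoiding the end colour, so it carries four
  colours; two sets in it coloured apart from each other and from G must be nested.\<close>
lemma mono_copy_B2_if_equal_ends:
  assumes "arrows3 2 M" "\<not> rainbow_copy 2 c N" "N = M + 2" "c {} = c {..<N}"
  shows "mono_copy 2 c N"
proof (rule ccontr)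
  assume no_mono: "\<not> mono_copy 2 c N"
  have "6 \<le> M" using arrows3_imp_three_mul_le[OF assms(1)] by simp
  obtain y2 where "y2 < N"
    and y2: "\<And>Z. Z \<subseteq> {..<N} \<Longrightarrow> Z \<noteq> {} \<Longrightarrow> Z \<noteq> {..<N} \<Longrightarrow> c Z = c {} \<Longrightarrow> y2 \<in> Z"
    using common_point_of_colour_class[OF no_mono assms(4)] assms(3) by auto
  obtain y1 where "y1 < N" "y1 \<noteq> y2"
    using assms(3) by (metis add_2_eq_Suc' less_Suc_eq not_less0 zero_less_Suc)
  define G where "G = {..<N} - {y2}"
  have G: "G \<subseteq> {..<N}" "y1 \<in> G" "card G = M + 1"
    using \<open>y1 < N\<close> \<open>y1 \<noteq> y2\<close> \<open>y2 < N\<close> assms(3) unfolding G_def by auto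
  have not_end_colour: "c Z \<noteq> c {}" if "y1 \<in> Z" "Z \<subseteq> G" for Z
    using y2[of Z] that \<open>y2 < N\<close> unfolding G_def by auto
  define Q where "Q = {Z. {y1} \<subseteq> Z \<and> Z \<subseteq> G}"
  have "card (G - {y1}) = M" using G by simp
  then have "\<not> card (c ` Q) \<le> 3"
    using mono_copy_if_interval_few_colours[OF assms(1), of "{y1}" G N c] G no_mono
    unfolding Q_def by auto
  then have "3 \<le> card (c ` Q - {c G})"
    using diff_card_le_card_Diff[of "{c G}" "c ` Q"] by simp
  then obtain w1 w2 w3 where "w1 \<in> c ` Q - {c G}" "w2 \<in> c ` Q - {c G}" "w1 \<noteq> w2"
    by (rule obtain_three_distinct)
  then obtain P1 P2 where P: "P1 \<in> Q" "P2 \<in> Q" "distinct [c P1, c P2, c G]" by auto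
  have comparable: "P1 \<subseteq> P2 \<or> P2 \<subseteq> P1"
  proof (rule ccontr)
    assume "\<not> (P1 \<subseteq> P2 \<or> P2 \<subseteq> P1)"
    with P have "diamond {} P1 P2 G" unfolding Q_def diamond_def by auto
    then have "\<not> distinct [c {}, c P1, c P2, c G]"
      using diamond_not_rainbow[OF assms(2)] G(1) by blast
    moreover have "c P1 \<noteq> c {}" "c P2 \<noteq> c {}" "c G \<noteq> c {}"
      using not_end_colour P(1,2) G(2) unfolding Q_def by auto
    ultimately show False using P(3) by auto
  qed
  have "7 \<le> card G" using G(3) \<open>6 \<le> M\<close> by simp
  have nested: "mono_copy 2 c N"
    if "P \<in> Q" "P' \<in> Q" "P \<subseteq> P'" "distinct [c P, c P', c G]" for P P'
    using mono_copy_B2_if_nested_pair[of c N G y1 P P', OF assms(2) G(1) assms(4)[symmetric]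
        \<open>7 \<le> card G\<close> _ _ _ not_end_colour] that
    unfolding Q_def by auto
  from comparable show False
    using nested[of P1 P2] nested[of P2 P1] P no_mono by auto
qed

lemma card_bool_lat_2: "card (bool_lat 2) = 4"
  unfolding bool_lat_2 by simp

lemma rainbow_arrows_imp_arrows3:
  assumes "rainbow_arrows n N"
  shows "arrows3 n N"
  unfolding arrows3_def
proof (intro allI impI)
  fix c :: "nat set \<Rightarrow> nat" assume three: "\<forall>X\<in>bool_lat N. c X < 3"
  have "\<not> rainbow_copy 2 c N"
  proof
    assume "rainbow_copy 2 c N"
    then obtain f where f: "order_embedding (bool_lat 2) (bool_lat N) f"
      and "inj_on c (f ` bool_lat 2)"
      unfolding rainbow_copy_def rainbow_def induced_copy_iff_order_embedding by blast
    then have "card (c ` f ` bool_lat 2) = 4"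
      using order_embedding_inj_on[OF f] by (simp add: card_image card_bool_lat_2)
    moreover have "c ` f ` bool_lat 2 \<subseteq> {..<3}"
      using f three unfolding order_embedding_def by auto
    then have "card (c ` f ` bool_lat 2) \<le> 3" using card_mono[of "{..<3::nat}"] by fastforce
    ultimately show False by simp
  qed
  then show "mono_copy n c N" using assms unfolding rainbow_arrows_def by blast
qed

lemma arrows3_imp_rainbow_arrows:
  assumes "arrows3 n M" "1 \<le> n"
  shows "rainbow_arrows n (M + n)"
proof -
  have "mono_copy n c (M + n)" if no_rainbow: "\<not> rainbow_copy 2 c (M + n)" for c
  proof -
    consider "n = 1" | "2 \<le> n" "c {} \<noteq> c {..<M + n}" | "n = 2" "c {} = c {..<M + n}"
      | "3 \<le> n" "c {} = c {..<M + n}"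
      using assms(2) by linarith
    then show ?thesis
    proof cases
      case 1
      moreover have "4 \<le> M + n" using arrows3_imp_three_mul_le[OF assms(1)] 1 by simp
      ultimately show ?thesis using mono_copy_B1_if_no_rainbow[OF no_rainbow] by simp
    next
      case 2
      then show ?thesis
        using mono_copy_if_ends_coloured_differently[OF assms(1) no_rainbow empty_subsetI order_refl]
        by simp
    next
      case 3
      then show ?thesis using mono_copy_B2_if_equal_ends assms(1) no_rainbow by simp
    next
      case 4
      then show ?thesis using mono_copy_if_equal_ends[OF assms(1) no_rainbow refl] by simp
    qed
  qed
  then show ?thesis unfolding rainbow_arrows_def by blast
qed

lemma Least_between:
  fixes P Q :: "nat \<Rightarrow> bool"
  assumes "\<And>m. Q m \<Longrightarrow> P m" "\<And>m. P m \<Longrightarrow> Q (m + k)"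
  shows "Least P \<le> Least Q \<and> Least Q \<le> Least P + k"
proof (cases "\<exists>m. P m")
  case True
  then have "P (Least P)" by (rule LeastI_ex)
  then have "Q (Least P + k)" by (rule assms(2))
  then have "Least Q \<le> Least P + k" "Q (Least Q)" by (auto intro: Least_le LeastI)
  then show ?thesis using assms(1) Least_le by metis
next
  case False
  then have "P = Q" using assms(1) by blast
  then show ?thesis by simp
qed

theorem theorem1p6:
  fixes n :: nat
  assumes "n \<ge> 1"
  shows "R 3 n \<le> RR 2 n \<and> RR 2 n \<le> R 3 n + n"
  unfolding R_eq_Least_arrows3 RR_eq_Least_rainbow_arrows
  using rainbow_arrows_imp_arrows3 arrows3_imp_rainbow_arrows[OF _ assms]
  by (rule Least_between)

end
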